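(* Fix momenta $(p,p_\varphi)$ and suppose $P^+(r)=P^-(s)=0$ for non-zero integers $r,s$. Then the cohomology of $\hat d_0$ on the subspace of $\mathcal F_{p,p_\varphi}$ annihilated by $L_0=p^+p^-+\hat L_0$ is nonzero only if $rs>0$, and it is then spanned by the classes of the following states: (i) if $r,s<0$: $(\alpha^-_r)^{-s}|p,p_\varphi\rangle$ (ghost number $0$) and $\tilde b_r(\alpha^-_r)^{-s-1}|p,p_\varphi\rangle$ (ghost number $-1$); (ii) if $r,s>0$: $(\alpha^+_{-r})^{s}|p,p_\varphi\rangle$ (ghost number $0$) and $c_{-r}(\alpha^+_{-r})^{s-1}|p,p_\varphi\rangle$ (ghost number $+1$).
   Context: Oscillators ($n\ne0$): $\alpha^\pm_n=\frac1{\sqrt2}(x_n\pm i\varphi_n)$ with $[\alpha^\pm_m,\alpha^\mp_n]=m\delta_{m+n,0}$, $[\alpha^\pm_m,\alpha^\pm_n]=0$; fermionic $\tilde b_n,c_n$ with $\{\tilde b_m,c_n\}=\delta_{m+n,0}$; fermionic $\zeta_n,\tilde\eta_n$ with $\{\zeta_m,\tilde\eta_n\}=\delta_{m+n,0}$; bosonic $\beta_n,\gamma_n$ with $[\gamma_m,\beta_n]=\delta_{m+n,0}$; all other (anti)commutators zero. $\mathcal F_{p,p_\varphi}$ is the Fock space generated by these modes on the vacuum $|p,p_\varphi\rangle$, which is annihilated by all modes with positive index. $p^\pm=\frac1{\sqrt2}\big(p\pm i(p_\varphi+i\sqrt2)\big)$ and $P^\pm(n)=p^\pm\mp n$. $\hat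 L_0$ is the level operator (sum of $-n$ over creation modes with index $n<0$), with $\hat L_0|p,p_\varphi\rangle=0$; $L_0=p^+p^-+\hat L_0$. Ghost number: $c_n,\tilde\eta_n$ carry $+1$, $\tilde b_n,\zeta_n$ carry $-1$, all others $0$, vacuum $0$. The operator $\hat d_0=\sum_{n\ne0}\big(P^+(n)\,c_{-n}\alpha^-_n+\tilde\eta_n\beta_{-n}\big)$ preserves the level and is used as a differential on $\ker L_0$. *)

theory Defs
  imports Complex_Main
begin

text \<open>An operator is indexed by a family and an integer index n (n \<noteq> 0):
  Ap n = alpha^+_n, Am n = alpha^-_n, Bt n = b~_n, Cg n = c_n, Zt n = zeta_n,
  Et n = eta~_n, Be n = beta_n, Ga n = gamma_n.\<close>
datatype mode = Ap | Am | Bt | Cg | Zt | Et | Be | Ga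

fun fermionic :: "mode \<Rightarrow> bool" where
  "fermionic Bt = True" | "fermionic Cg = True" | "fermionic Zt = True" | "fermionic Et = True"
| "fermionic Ap = False" | "fermionic Am = False" | "fermionic Be = False" | "fermionic Ga = False"

fun ghost_charge :: "mode \<Rightarrow> int" where
  "ghost_charge Cg = 1" | "ghost_charge Et = 1" | "ghost_charge Bt = -1" | "ghost_charge Zt = -1"
| "ghost_charge Ap = 0" | "ghost_charge Am = 0" | "ghost_charge Be = 0" | "ghost_charge Ga = 0"

text \<open>Value of the (super)commutator [X_m, Y_n} of the modes, as given in the context:
  [a^+_m,a^-_n] = [a^-_m,a^+_n] = m delta_{m+n,0}; {b~_m,c_n} = {c_m,b~_n} = delta;
  {zeta_m,eta~_n} = {eta~_m,zeta_n} = delta; [gamma_m,beta_n] = delta, hence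
  [beta_m,gamma_n] = - delta; all others zero.\<close>
definition bracket :: "mode \<Rightarrow> int \<Rightarrow> mode \<Rightarrow> int \<Rightarrow> complex" where
  "bracket k m l n =
     (if m + n \<noteq> 0 then 0 else
      (case (k, l) of
         (Ap, Am) \<Rightarrow> of_int m | (Am, Ap) \<Rightarrow> of_int m
       | (Bt, Cg) \<Rightarrow> 1 | (Cg, Bt) \<Rightarrow> 1
       | (Zt, Et) \<Rightarrow> 1 | (Et, Zt) \<Rightarrow> 1
       | (Ga, Be) \<Rightarrow> 1 | (Be, Ga) \<Rightarrow> -1
       | _ \<Rightarrow> 0))"

definition supercomm :: "mode \<Rightarrow> mode \<Rightarrow> ('v::ab_group_add \<Rightarrow> 'v) \<Rightarrow> ('v \<Rightarrow> 'v) \<Rightarrow> 'v \<Rightarrow> 'v" where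
  "supercomm k l A B v = (if fermionic k \<and> fermionic l then A (B v) + B (A v) else A (B v) - B (A v))"

text \<open>Monomial state X1_{n1} X2_{n2} ... Xj_{nj} |vac> (first list element applied last).\<close>
definition mono :: "(mode \<Rightarrow> int \<Rightarrow> 'v \<Rightarrow> 'v) \<Rightarrow> 'v \<Rightarrow> (mode \<times> int) list \<Rightarrow> 'v" where
  "mono op vac ms = foldr (\<lambda>(k, n) v. op k n v) ms vac"

definition creation_list :: "(mode \<times> int) list \<Rightarrow> bool" where
  "creation_list ms \<longleftrightarrow> (\<forall>x \<in> set ms. snd x < 0)"

definition mono_level :: "(mode \<times> int) list \<Rightarrow> int" where
  "mono_level ms = sum_list (map (\<lambda>x. - snd x) ms)"

definition mono_ghost :: "(mode \<times> int) list \<Rightarrow> int" where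
  "mono_ghost ms = sum_list (map (\<lambda>x. ghost_charge (fst x)) ms)"

definition is_fock_space ::
  "(complex \<Rightarrow> 'v::ab_group_add \<Rightarrow> 'v) \<Rightarrow> (mode \<Rightarrow> int \<Rightarrow> 'v \<Rightarrow> 'v) \<Rightarrow> 'v \<Rightarrow> ('v \<Rightarrow> 'v) \<Rightarrow> bool"
where
  "is_fock_space sc op vac Lhat \<longleftrightarrow>
     vector_space sc
   \<and> (\<forall>k n. n \<noteq> 0 \<longrightarrow> Vector_Spaces.linear sc sc (op k n))
   \<and> (\<forall>k m l n v. m \<noteq> 0 \<longrightarrow> n \<noteq> 0 \<longrightarrow>
         supercomm k l (op k m) (op l n) v = sc (bracket k m l n) v)
   \<and> (\<forall>k n. n > 0 \<longrightarrow> op k n vac = 0)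
   \<and> module.span sc {mono op vac ms | ms. creation_list ms} = UNIV
   \<and> Vector_Spaces.linear sc sc Lhat
   \<and> (\<forall>ms. creation_list ms \<longrightarrow>
         Lhat (mono op vac ms) = sc (of_int (mono_level ms)) (mono op vac ms))"

definition p_plus :: "complex \<Rightarrow> complex \<Rightarrow> complex" where
  "p_plus p pphi = (p + \<i> * (pphi + \<i> * sqrt 2)) / sqrt 2"

definition p_minus :: "complex \<Rightarrow> complex \<Rightarrow> complex" where
  "p_minus p pphi = (p - \<i> * (pphi + \<i> * sqrt 2)) / sqrt 2"

definition Pp :: "complex \<Rightarrow> complex \<Rightarrow> int \<Rightarrow> complex" where
  "Pp p pphi n = p_plus p pphi - of_int n"

definition Pm :: "complex \<Rightarrow> complex \<Rightarrow> int \<Rightarrow> complex" where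
  "Pm p pphi n = p_minus p pphi + of_int n"

definition d0_term ::
  "(complex \<Rightarrow> 'v::ab_group_add \<Rightarrow> 'v) \<Rightarrow> (mode \<Rightarrow> int \<Rightarrow> 'v \<Rightarrow> 'v) \<Rightarrow> complex \<Rightarrow> complex \<Rightarrow> int \<Rightarrow> 'v \<Rightarrow> 'v"
where
  "d0_term sc op p pphi n v = sc (Pp p pphi n) (op Cg (-n) (op Am n v)) + op Et n (op Be (-n) v)"

text \<open>d0 v: the sum over the (on the Fock space finitely many) n \<noteq> 0 with non-zero term.\<close>
definition d0 ::
  "(complex \<Rightarrow> 'v::ab_group_add \<Rightarrow> 'v) \<Rightarrow> (mode \<Rightarrow> int \<Rightarrow> 'v \<Rightarrow> 'v) \<Rightarrow> complex \<Rightarrow> complex \<Rightarrow> 'v \<Rightarrow> 'v"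
where
  "d0 sc op p pphi v = (\<Sum>n \<in> {n. n \<noteq> 0 \<and> d0_term sc op p pphi n v \<noteq> 0}. d0_term sc op p pphi n v)"

definition kerL0 ::
  "(complex \<Rightarrow> 'v::ab_group_add \<Rightarrow> 'v) \<Rightarrow> ('v \<Rightarrow> 'v) \<Rightarrow> complex \<Rightarrow> complex \<Rightarrow> 'v set"
where
  "kerL0 sc Lhat p pphi = {v. sc (p_plus p pphi * p_minus p pphi) v + Lhat v = 0}"

end

(* The differential is d = sum_n d_n with d_n = P^+(n) c_{-n} alpha^-_n + eta~_n beta_{-n}; on the
   kernel of L_0, i.e. at level r s, only the finitely many modes with |n| <= r s contribute.
   The operators h_n = b~_n alpha^+_{-n} / (|n| P^+(n)) + sgn(n) zeta_{-n} gamma_n (without the first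
   summand at n = r, where P^+ vanishes) satisfy d_m h_n + h_n d_m = delta_{mn} N_n, so N = sum_n N_n
   is null-homotopic and commutes with d. Since N counts the oscillators of a monomial other than
   alpha^-_r, b~_r (r < 0) or alpha^+_{-r}, c_{-r} (r > 0), a closed vector splits into closed
   N-eigencomponents, each component with eigenvalue q <> 0 is exact (it is d (h v_q) / q), and the
   component with q = 0 is a combination of monomials in the two surviving oscillators at level r s;
   the fermionic one squares to zero, which leaves the two stated states. For r s < 0 the kernel of
   L_0 is trivial because levels are non-negative. *)

theory Submission
  imports Defs
begin

section \<open>Linear algebra\<close>

lemma eigenvector_sum_eq_0:
  fixes sc :: "'a::field \<Rightarrow> 'v::ab_group_add \<Rightarrow> 'v"
  assumes T: "Vector_Spaces.linear sc sc T" and "finite I"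
    and "\<forall>i\<in>I. T (u i) = sc (\<mu> i) (u i) \<and> \<mu> i \<noteq> c" and "T (sum u I) = sc c (sum u I)"
  shows "sum u I = 0"
  using assms(2-)
proof (induction I arbitrary: u rule: finite_induct)
  case empty
  then show ?case by simp
next
  case (insert a J)
  interpret T: Vector_Spaces.linear sc sc T by (fact T)
  define w where "w = sum u (insert a J)"
  define u' where "u' i = sc (\<mu> i - \<mu> a) (u i)" for i
  have Tw: "T w = sc c w" and Tua: "T (u a) = sc (\<mu> a) (u a)"
    using insert.prems by (simp_all add: w_def)
  \<comment> \<open>Applying \<open>T - \<mu> a\<close> removes the summand \<open>u a\<close>.\<close>
  have "sum u' J = T (sum u J) - sc (\<mu> a) (sum u J)"
    using insert.prems(1)
    by (simp add: u'_def T.sum T.vs1.scale_left_diff_distrib sum_subtractf T.vs1.scale_sum_right)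
  also have "\<dots> = sc (c - \<mu> a) w"
    using Tw Tua insert.hyps
    by (simp add: w_def T.add T.vs1.scale_left_diff_distrib T.vs1.scale_right_distrib algebra_simps)
  finally have u'J: "sum u' J = sc (c - \<mu> a) w" .
  have "sum u' J = 0"
  proof (rule insert.IH)
    show "\<forall>i\<in>J. T (u' i) = sc (\<mu> i) (u' i) \<and> \<mu> i \<noteq> c"
      using insert.prems(1) by (auto simp: u'_def T.scale mult.commute)
    show "T (sum u' J) = sc c (sum u' J)"
      unfolding u'J T.scale Tw by (simp add: mult.commute)
  qed
  then show ?case
    using u'J insert.prems(1) by (auto simp flip: w_def)
qed

lemma eigenvector_sum_eq_component:
  fixes sc :: "'a::field \<Rightarrow> 'v::ab_group_add \<Rightarrow> 'v"
  assumes T: "Vector_Spaces.linear sc sc T" and fin: "finite I"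
    and eig: "\<forall>i\<in>I. T (u i) = sc (\<mu> i) (u i)"
    and sum_eig: "T (sum u I) = sc c (sum u I)"
  shows "sum u I = sum u {i\<in>I. \<mu> i = c}"
proof -
  interpret T: Vector_Spaces.linear sc sc T by (fact T)
  have split: "sum u I = sum u {i\<in>I. \<mu> i = c} + sum u {i\<in>I. \<mu> i \<noteq> c}"
    using sum.Int_Diff[OF fin, of u "{i. \<mu> i = c}"] by (simp add: Int_def set_diff_eq)
  have "T (sum u {i\<in>I. \<mu> i = c}) = sc c (sum u {i\<in>I. \<mu> i = c})"
    using eig by (simp add: T.sum T.vs1.scale_sum_right)
  moreover have "sum u {i\<in>I. \<mu> i \<noteq> c} = sum u I - sum u {i\<in>I. \<mu> i = c}"
    using split by simp
  ultimately have rest: "T (sum u {i\<in>I. \<mu> i \<noteq> c}) = sc c (sum u {i\<in>I. \<mu> i \<noteq> c})"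
    using sum_eig by (simp add: T.diff T.vs1.scale_right_diff_distrib)
  have "sum u {i\<in>I. \<mu> i \<noteq> c} = 0"
    using eigenvector_sum_eq_0[OF T _ _ rest] fin eig by auto
  then show ?thesis
    using split by simp
qed

lemma (in module) in_span_pairE:
  assumes "x \<in> span {y, z}"
  obtains a b where "x = a *s y + b *s z"
proof -
  obtain a b where "x - a *s y = b *s z"
    using assms by (auto simp: span_breakdown_eq span_singleton)
  then show ?thesis
    by (intro that[of a b]) (simp add: diff_eq_eq add.commute)
qed

section \<open>Oscillator algebra on the Fock space\<close>

lemma bracket_mixed_statistics: "fermionic k \<noteq> fermionic l \<Longrightarrow> bracket k m l n = 0"
  by (cases k; cases l; simp add: bracket_def)

lemma bracket_same_mode: "bracket k m k n = 0"
  by (cases k; simp add: bracket_def)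

definition exchange_sign :: "mode \<Rightarrow> mode \<Rightarrow> complex" where
  "exchange_sign k l = (if fermionic k \<and> fermionic l then -1 else 1)"

lemma mono_Nil [simp]: "mono op vac [] = vac"
  by (simp add: mono_def)

lemma mono_Cons [simp]: "mono op vac ((k, n) # ms) = op k n (mono op vac ms)"
  by (simp add: mono_def)

lemma creation_list_Cons [simp]: "creation_list ((k, n) # ms) \<longleftrightarrow> n < 0 \<and> creation_list ms"
  by (auto simp: creation_list_def)

lemma creation_list_replicate: "i < 0 \<Longrightarrow> creation_list (replicate n (k, i))"
  by (simp add: creation_list_def)

lemma mono_level_Nil [simp]: "mono_level [] = 0"
  by (simp add: mono_level_def)

lemma mono_level_Cons [simp]: "mono_level ((k, n) # ms) = - n + mono_level ms"
  by (simp add: mono_level_def)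

lemma mono_level_nonneg: "creation_list ms \<Longrightarrow> 0 \<le> mono_level ms"
  by (induction ms) auto

lemma mono_level_ge_mode: "creation_list ms \<Longrightarrow> x \<in> set ms \<Longrightarrow> - snd x \<le> mono_level ms"
  by (induction ms) (auto dest: mono_level_nonneg)

lemma mono_level_const: "\<forall>x\<in>set ms. snd x = i \<Longrightarrow> mono_level ms = - i * int (length ms)"
  by (induction ms) (auto simp: algebra_simps)

lemma mono_level_replicate [simp]: "mono_level (replicate n (k, i)) = - i * int n"
  by (induction n) (auto simp: algebra_simps)

lemma mono_ghost_Cons [simp]: "mono_ghost ((k, i) # ms) = ghost_charge k + mono_ghost ms"
  by (simp add: mono_ghost_def)

lemma mono_ghost_replicate [simp]: "mono_ghost (replicate n (k, i)) = ghost_charge k * int n"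
  by (induction n) (auto simp: mono_ghost_def algebra_simps)

locale fock_space =
  fixes sc :: "complex \<Rightarrow> 'v::ab_group_add \<Rightarrow> 'v"
    and op :: "mode \<Rightarrow> int \<Rightarrow> 'v \<Rightarrow> 'v"
    and vac :: 'v
    and Lhat :: "'v \<Rightarrow> 'v"
  assumes fock: "is_fock_space sc op vac Lhat"
begin

sublocale vs: vector_space sc
  using fock by (simp add: is_fock_space_def)

lemma linear_op: "n \<noteq> 0 \<Longrightarrow> Vector_Spaces.linear sc sc (op k n)"
  using fock by (simp add: is_fock_space_def)

lemma op_supercomm:
  "m \<noteq> 0 \<Longrightarrow> n \<noteq> 0 \<Longrightarrow> supercomm k l (op k m) (op l n) v = sc (bracket k m l n) v"
  using fock by (simp add: is_fock_space_def)

lemma op_vac: "n > 0 \<Longrightarrow> op k n vac = 0"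
  using fock by (simp add: is_fock_space_def)

lemma span_creation_monos: "vs.span {mono op vac ms | ms. creation_list ms} = UNIV"
  using fock by (simp add: is_fock_space_def)

lemma linear_Lhat: "Vector_Spaces.linear sc sc Lhat"
  using fock by (simp add: is_fock_space_def)

lemma Lhat_mono:
  "creation_list ms \<Longrightarrow> Lhat (mono op vac ms) = sc (of_int (mono_level ms)) (mono op vac ms)"
  using fock by (simp add: is_fock_space_def)

context
  fixes k :: mode and n :: int assumes n: "n \<noteq> 0"
begin

interpretation op: module_hom sc sc "op k n"
  using linear_op[OF n] by (simp add: module_hom_iff_linear)

lemmas op_add [simp] = op.add
  and op_scale [simp] = op.scale
  and op_zero [simp] = op.zero
  and op_diff [simp] = op.diff
  and op_sum = op.sum

end

sublocale Lhat: module_hom sc sc Lhat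
  using linear_Lhat by (simp add: module_hom_iff_linear)

declare Lhat.add [simp] Lhat.scale [simp]

lemma add_self_eq_0_iff [simp]: "(x::'v) + x = 0 \<longleftrightarrow> x = 0"
proof
  assume "x + x = 0"
  then have "sc 2 x = 0"
    using vs.scale_left_distrib[of 1 1 x] by simp
  then show "x = 0" by simp
qed simp

lemma op_exchange:
  assumes "m \<noteq> 0" "n \<noteq> 0"
  shows "op k m (op l n v) = sc (exchange_sign k l) (op l n (op k m v)) + sc (bracket k m l n) v"
  using op_supercomm[OF assms, of k l v]
  by (auto simp: supercomm_def exchange_sign_def diff_eq_eq eq_diff_eq add.commute)

lemma op_fermionic_square: "fermionic k \<Longrightarrow> n \<noteq> 0 \<Longrightarrow> op k n (op k n v) = 0"
  using op_supercomm[of n n k k v] by (simp add: supercomm_def bracket_same_mode)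

lemma op_commute_mixed_statistics:
  "m \<noteq> 0 \<Longrightarrow> n \<noteq> 0 \<Longrightarrow> fermionic k \<noteq> fermionic l \<Longrightarrow> op k m (op l n v) = op l n (op k m v)"
  using op_exchange[of m n k l v] by (auto simp: exchange_sign_def bracket_mixed_statistics)

lemma op_fermionic_bilinears_anticomm:
  assumes "fermionic kx" "\<not> fermionic ky" "fermionic kz" "\<not> fermionic kw"
    and "nx \<noteq> 0" "ny \<noteq> 0" "nz \<noteq> 0" "nw \<noteq> 0"
  shows "op kx nx (op ky ny (op kz nz (op kw nw v))) + op kz nz (op kw nw (op kx nx (op ky ny v)))
     = sc (bracket kx nx kz nz) (op ky ny (op kw nw v)) + sc (bracket kw nw ky ny) (op kz nz (op kx nx v))"
proof -
  have YZ: "op ky ny (op kz nz u) = op kz nz (op ky ny u)" for u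
    using op_commute_mixed_statistics assms by auto
  have WX: "op kw nw (op kx nx u) = op kx nx (op kw nw u)" for u
    using op_commute_mixed_statistics assms by auto
  have XZ: "op kx nx (op kz nz u) = - op kz nz (op kx nx u) + sc (bracket kx nx kz nz) u" for u
    using op_exchange[of nx nz kx kz u] assms by (simp add: exchange_sign_def)
  have WY: "op kw nw (op ky ny u) = op ky ny (op kw nw u) + sc (bracket kw nw ky ny) u" for u
    using op_exchange[of nw ny kw ky u] assms by (simp add: exchange_sign_def)
  have "op kx nx (op ky ny (op kz nz (op kw nw v))) =
     - op kz nz (op kx nx (op ky ny (op kw nw v))) + sc (bracket kx nx kz nz) (op ky ny (op kw nw v))"
    by (simp only: YZ XZ)
  moreover have "op kz nz (op kw nw (op kx nx (op ky ny v))) =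
     op kz nz (op kx nx (op ky ny (op kw nw v))) + sc (bracket kw nw ky ny) (op kz nz (op kx nx v))"
    using assms by (simp add: WX WY)
  ultimately show ?thesis
    by (simp add: algebra_simps)
qed

lemma op_even_bilinear_comm:
  assumes "fermionic ka = fermionic kb" "na \<noteq> 0" "nb \<noteq> 0" "nc \<noteq> 0"
  shows "op ka na (op kb nb (op kc nc v)) = op kc nc (op ka na (op kb nb v))
     + sc (exchange_sign kb kc * bracket ka na kc nc) (op kb nb v) + sc (bracket kb nb kc nc) (op ka na v)"
proof -
  have "op ka na (op kb nb (op kc nc v)) =
      op ka na (sc (exchange_sign kb kc) (op kc nc (op kb nb v)) + sc (bracket kb nb kc nc) v)"
    using op_exchange[of nb nc kb kc v] assms by simp
  also have "\<dots> = sc (exchange_sign kb kc) (sc (exchange_sign ka kc) (op kc nc (op ka na (op kb nb v)))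
      + sc (bracket ka na kc nc) (op kb nb v)) + sc (bracket kb nb kc nc) (op ka na v)"
    using op_exchange[of na nc ka kc "op kb nb v"] assms by simp
  also have "exchange_sign kb kc * exchange_sign ka kc = 1"
    using assms(1) by (simp add: exchange_sign_def)
  ultimately show ?thesis
    by (simp add: vs.scale_right_distrib)
qed

definition level_monos :: "int \<Rightarrow> 'v set" where
  "level_monos l = {mono op vac ms | ms. creation_list ms \<and> mono_level ms = l}"

lemma op_creation_span_level:
  assumes "m < 0" and "x \<in> vs.span (level_monos l)"
  shows "op k m x \<in> vs.span (level_monos (l - m))"
  using assms(2)
proof (induction rule: vs.span_induct_alt)
  case base
  then show ?case
    using assms(1) by (simp add: vs.span_zero)
next
  case (step c x y)
  then obtain ms where ms: "x = mono op vac ms" "creation_list ms" "mono_level ms = l"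
    unfolding level_monos_def by auto
  have "op k m x \<in> level_monos (l - m)"
    unfolding level_monos_def using ms assms(1) by (intro CollectI exI[of _ "(k, m) # ms"]) simp
  then show ?case
    using step assms(1) by (simp add: vs.span_add vs.span_scale vs.span_base)
qed

lemma op_annihilation_mono_span_level:
  "n > 0 \<Longrightarrow> creation_list ms \<Longrightarrow> op k n (mono op vac ms) \<in> vs.span (level_monos (mono_level ms - n))"
proof (induction ms)
  case Nil
  then show ?case by (simp add: op_vac vs.span_zero)
next
  case (Cons x ms)
  obtain l m where x: "x = (l, m)" by force
  have m: "m < 0" and ms: "creation_list ms"
    using Cons.prems x by auto
  have "op k n (mono op vac (x # ms)) = sc (exchange_sign k l) (op l m (op k n (mono op vac ms)))
      + sc (bracket k n l m) (mono op vac ms)"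
    using op_exchange[of n m k l] Cons.prems m x by simp
  moreover have "op l m (op k n (mono op vac ms)) \<in> vs.span (level_monos (mono_level (x # ms) - n))"
    using op_creation_span_level[OF m Cons.IH[OF Cons.prems(1) ms], of l] x by (simp add: algebra_simps)
  moreover have "sc (bracket k n l m) (mono op vac ms) \<in> vs.span (level_monos (mono_level (x # ms) - n))"
  proof (cases "n + m = 0")
    case True
    then have "mono op vac ms \<in> level_monos (mono_level (x # ms) - n)"
      unfolding level_monos_def using ms x by auto
    then show ?thesis by (simp add: vs.span_scale vs.span_base)
  next
    case False
    then show ?thesis by (simp add: bracket_def vs.span_zero)
  qed
  ultimately show ?case
    by (simp add: vs.span_add vs.span_scale)
qed

lemma Lhat_span_level: "x \<in> vs.span (level_monos l) \<Longrightarrow> Lhat x = sc (of_int l) x"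
proof (induction rule: vs.span_induct_alt)
  case base
  then show ?case by simp
next
  case (step c x y)
  then obtain ms where "x = mono op vac ms" "creation_list ms" "mono_level ms = l"
    unfolding level_monos_def by auto
  then show ?case
    using step Lhat_mono[of ms] by (simp add: vs.scale_right_distrib mult.commute)
qed

lemma Lhat_op: "n \<noteq> 0 \<Longrightarrow> Lhat (op k n x) = op k n (Lhat x) - sc (of_int n) (op k n x)"
proof -
  assume n: "n \<noteq> 0"
  have "x \<in> vs.span {mono op vac ms | ms. creation_list ms}"
    using span_creation_monos by simp
  then show ?thesis
  proof (induction rule: vs.span_induct_alt)
    case base
    then show ?case using n by simp
  next
    case (step c x y)
    then obtain ms where x: "x = mono op vac ms" and ms: "creation_list ms"
      by auto
    have "Lhat (op k n x) = sc (of_int (mono_level ms - n)) (op k n x)"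
    proof (cases "n < 0")
      case True
      then show ?thesis using Lhat_mono[of "(k, n) # ms"] ms x by simp
    next
      case False
      then have "n > 0" using n by simp
      then show ?thesis
        using Lhat_span_level[OF op_annihilation_mono_span_level[OF _ ms]] x by simp
    qed
    then have hx: "Lhat (op k n x) = op k n (Lhat x) - sc (of_int n) (op k n x)"
      using Lhat_mono[OF ms] x n by (simp add: vs.scale_left_diff_distrib)
    show ?case
      using n by (simp add: hx step.IH vs.scale_right_diff_distrib algebra_simps)
  qed
qed

lemma op_Lhat_eigenvector:
  "n \<noteq> 0 \<Longrightarrow> Lhat x = sc \<mu> x \<Longrightarrow> Lhat (op k n x) = sc (\<mu> - of_int n) (op k n x)"
  using Lhat_op[of n k x] by (simp add: vs.scale_left_diff_distrib)

lemma subspace_Lhat_eigenspace: "vs.subspace {x. Lhat x = sc \<mu> x}"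
  unfolding vs.subspace_def by (auto simp: vs.scale_right_distrib mult.commute)

lemma Lhat_eigenvector_mono_expansion:
  assumes "Lhat x = sc \<mu> x"
  obtains t c ms where "finite t" "x = (\<Sum>a\<in>t. sc (c a) a)"
    "\<And>a. a \<in> t \<Longrightarrow> mono op vac (ms a) = a \<and> creation_list (ms a) \<and> of_int (mono_level (ms a)) = \<mu>"
proof -
  have "x \<in> vs.span {mono op vac ms | ms. creation_list ms}"
    using span_creation_monos by simp
  then obtain t c where t: "finite t" "t \<subseteq> {mono op vac ms | ms. creation_list ms}"
    and x: "x = (\<Sum>a\<in>t. sc (c a) a)"
    unfolding vs.span_explicit by auto
  then have "\<forall>a\<in>t. \<exists>ms. mono op vac ms = a \<and> creation_list ms"
    by blast
  then obtain ms where ms: "\<And>a. a \<in> t \<Longrightarrow> mono op vac (ms a) = a \<and> creation_list (ms a)"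
    by metis
  define lv where "lv a = (of_int (mono_level (ms a)) :: complex)" for a
  have "Lhat (sc (c a) a) = sc (lv a) (sc (c a) a)" if "a \<in> t" for a
    using Lhat_mono[of "ms a"] ms[OF that] by (simp add: lv_def mult.commute)
  then have "x = (\<Sum>a\<in>{a\<in>t. lv a = \<mu>}. sc (c a) a)"
    using eigenvector_sum_eq_component[OF linear_Lhat t(1)] assms x by simp
  then show ?thesis
  proof (rule that[rotated])
    show "finite {a\<in>t. lv a = \<mu>}"
      using t(1) by simp
    show "mono op vac (ms a) = a \<and> creation_list (ms a) \<and> of_int (mono_level (ms a)) = \<mu>"
      if "a \<in> {a\<in>t. lv a = \<mu>}" for a
      using ms that by (simp add: lv_def)
  qed
qed

lemma Lhat_eigenvector_negative_eq_0: "Lhat x = sc (of_int l) x \<Longrightarrow> l < 0 \<Longrightarrow> x = 0"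
proof -
  assume ev: "Lhat x = sc (of_int l) x" and l: "l < 0"
  obtain t c ms where "finite t" "x = (\<Sum>a\<in>t. sc (c a) a)"
    and ms: "\<And>a. a \<in> t \<Longrightarrow> creation_list (ms a) \<and> mono_level (ms a) = l"
    using Lhat_eigenvector_mono_expansion[OF ev] by (metis of_int_eq_iff)
  moreover have "t = {}"
    using ms mono_level_nonneg l by fastforce
  ultimately show ?thesis by simp
qed

lemma op_above_level_eq_0: "Lhat x = sc (of_int l) x \<Longrightarrow> n \<noteq> 0 \<Longrightarrow> l < n \<Longrightarrow> op k n x = 0"
  using op_Lhat_eigenvector[of n x "of_int l" k] Lhat_eigenvector_negative_eq_0[of _ "l - n"] by simp

lemma op_mono_eq_0:
  "n > 0 \<Longrightarrow> creation_list ms \<Longrightarrow> \<forall>x\<in>set ms. bracket k n (fst x) (snd x) = 0 \<Longrightarrow>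
   op k n (mono op vac ms) = 0"
proof (induction ms)
  case Nil
  then show ?case by (simp add: op_vac)
next
  case (Cons x ms)
  obtain l m where x: "x = (l, m)" by force
  then have m: "m < 0" and ms: "creation_list ms"
    using Cons.prems by auto
  have IH: "op k n (mono op vac ms) = 0"
    by (rule Cons.IH) (use Cons.prems ms in auto)
  have "bracket k n l m = 0"
    using Cons.prems(3) x by auto
  moreover have "op k n (mono op vac (x # ms)) = sc (exchange_sign k l) (op l m (op k n (mono op vac ms)))
      + sc (bracket k n l m) (mono op vac ms)"
    using op_exchange[of n m k l] Cons.prems(1) m x by simp
  ultimately show ?case
    using IH m by (simp del: mono_Cons)
qed

lemma mono_two_modes_cases:
  assumes i: "i < 0" and kb: "\<not> fermionic kb" and kf: "fermionic kf"
  shows "\<forall>x\<in>set ms. x = (kb, i) \<or> x = (kf, i) \<Longrightarrow>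
    mono op vac ms = mono op vac (replicate (length ms) (kb, i))
    \<or> ms \<noteq> [] \<and> mono op vac ms = mono op vac ((kf, i) # replicate (length ms - 1) (kb, i))
    \<or> mono op vac ms = 0"
proof (induction ms)
  case Nil
  then show ?case by simp
next
  case (Cons x ms)
  have i0: "i \<noteq> 0"
    using i by simp
  have swap: "op kb i (op kf i y) = op kf i (op kb i y)" for y
    using op_commute_mixed_statistics[OF i0 i0] kb kf by simp
  have IH: "mono op vac ms = mono op vac (replicate (length ms) (kb, i))
    \<or> ms \<noteq> [] \<and> mono op vac ms = mono op vac ((kf, i) # replicate (length ms - 1) (kb, i))
    \<or> mono op vac ms = 0"
    using Cons by simp
  from Cons.prems consider "x = (kb, i)" | "x = (kf, i)"
    by auto
  then show ?case
  proof cases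
    case 1
    from IH show ?thesis
    proof (elim disjE conjE)
      assume "ms \<noteq> []" and "mono op vac ms = mono op vac ((kf, i) # replicate (length ms - 1) (kb, i))"
      then have "mono op vac (x # ms) = op kf i (op kb i (mono op vac (replicate (length ms - 1) (kb, i))))"
        and "op kb i (mono op vac (replicate (length ms - 1) (kb, i))) = mono op vac (replicate (length ms) (kb, i))"
        using 1 swap by (simp, cases ms, simp_all)
      then show ?thesis by simp
    qed (use 1 i0 in simp_all)
  next
    case 2
    from IH show ?thesis
      by (elim disjE conjE) (use 2 i0 op_fermionic_square[OF kf i0] in simp_all)
  qed
qed

end

section \<open>The differential and its contracting homotopy\<close>

locale fock_momenta = fock_space sc op vac Lhat
  for sc :: "complex \<Rightarrow> 'v::ab_group_add \<Rightarrow> 'v" and op vac Lhat +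
  fixes p pphi :: complex and r s :: int
  assumes Pp_r: "Pp p pphi r = 0" and Pm_s: "Pm p pphi s = 0"
begin

lemma Pp_eq: "Pp p pphi n = of_int (r - n)"
  using Pp_r by (simp add: Pp_def)

lemma kerL0_iff: "v \<in> kerL0 sc Lhat p pphi \<longleftrightarrow> Lhat v = sc (of_int (r * s)) v"
proof -
  have "p_plus p pphi = of_int r" "p_minus p pphi = - of_int s"
    using Pp_r Pm_s by (simp_all add: Pp_def Pm_def eq_neg_iff_add_eq_0)
  then have "v \<in> kerL0 sc Lhat p pphi \<longleftrightarrow> sc (- of_int (r * s)) v + Lhat v = 0"
    by (simp add: kerL0_def)
  also have "\<dots> \<longleftrightarrow> Lhat v = sc (of_int (r * s)) v"
    by (auto simp: add_eq_0_iff2 eq_neg_iff_add_eq_0 add.commute)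
  finally show ?thesis .
qed

abbreviation d_term :: "int \<Rightarrow> 'v \<Rightarrow> 'v" where
  "d_term \<equiv> d0_term sc op p pphi"

lemma d_term_add [simp]: "n \<noteq> 0 \<Longrightarrow> d_term n (x + y) = d_term n x + d_term n y"
  and d_term_scale [simp]: "n \<noteq> 0 \<Longrightarrow> d_term n (sc a x) = sc a (d_term n x)"
  by (simp_all add: d0_term_def vs.scale_right_distrib algebra_simps mult.commute)

lemma d_term_sum: "n \<noteq> 0 \<Longrightarrow> d_term n (sum g A) = (\<Sum>a\<in>A. d_term n (g a))"
  by (rule additive.sum) (simp add: additive_def)

text \<open>The mode \<open>n = r\<close> is not contracted, since \<open>P\<^sup>+(r) = 0\<close>; its oscillators survive in cohomology.\<close>
definition homotopy_coeff :: "int \<Rightarrow> complex" where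
  "homotopy_coeff n = (if n = r then 0 else 1 / (of_int \<bar>n\<bar> * Pp p pphi n))"

definition homotopy_term :: "int \<Rightarrow> 'v \<Rightarrow> 'v" where
  "homotopy_term n v =
     sc (homotopy_coeff n) (op Bt n (op Ap (-n) v)) + sc (of_int (sgn n)) (op Zt (-n) (op Ga n v))"

definition number_term :: "int \<Rightarrow> 'v \<Rightarrow> 'v" where
  "number_term n v =
     sc (Pp p pphi n * homotopy_coeff n) (op Am n (op Ap (-n) v) - sc (of_int n) (op Bt n (op Cg (-n) v)))
   + sc (of_int (sgn n)) (op Be (-n) (op Ga n v) + op Zt (-n) (op Et n v))"

lemma homotopy_term_add [simp]: "n \<noteq> 0 \<Longrightarrow> homotopy_term n (x + y) = homotopy_term n x + homotopy_term n y"
  and homotopy_term_scale [simp]: "n \<noteq> 0 \<Longrightarrow> homotopy_term n (sc a x) = sc a (homotopy_term n x)"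
  by (simp_all add: homotopy_term_def vs.scale_right_distrib algebra_simps mult.commute)

lemma number_term_add [simp]: "n \<noteq> 0 \<Longrightarrow> number_term n (x + y) = number_term n x + number_term n y"
  and number_term_scale [simp]: "n \<noteq> 0 \<Longrightarrow> number_term n (sc a x) = sc a (number_term n x)"
  by (simp_all add: number_term_def vs.scale_right_distrib vs.scale_right_diff_distrib algebra_simps
      mult.commute)

lemma d_term_homotopy_term_anticomm:
  assumes n: "n \<noteq> 0" and m: "m \<noteq> 0"
  shows "d_term n (homotopy_term m v) + homotopy_term m (d_term n v) = (if n = m then number_term n v else 0)"
proof -
  let ?X = "op Cg (-n)" and ?Y = "op Am n" and ?X' = "op Et n" and ?Y' = "op Be (-n)"
  let ?Z = "op Bt m" and ?W = "op Ap (-m)" and ?Z' = "op Zt (-m)" and ?W' = "op Ga m"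
  have g1: "?X (?Y (?Z (?W v))) + ?Z (?W (?X (?Y v)))
      = sc (bracket Cg (-n) Bt m) (?Y (?W v)) + sc (bracket Ap (-m) Am n) (?Z (?X v))"
    by (rule op_fermionic_bilinears_anticomm) (use n m in auto)
  have g2: "?X (?Y (?Z' (?W' v))) + ?Z' (?W' (?X (?Y v)))
      = sc (bracket Cg (-n) Zt (-m)) (?Y (?W' v)) + sc (bracket Ga m Am n) (?Z' (?X v))"
    by (rule op_fermionic_bilinears_anticomm) (use n m in auto)
  have g3: "?X' (?Y' (?Z (?W v))) + ?Z (?W (?X' (?Y' v)))
      = sc (bracket Et n Bt m) (?Y' (?W v)) + sc (bracket Ap (-m) Be (-n)) (?Z (?X' v))"
    by (rule op_fermionic_bilinears_anticomm) (use n m in auto)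
  have g4: "?X' (?Y' (?Z' (?W' v))) + ?Z' (?W' (?X' (?Y' v)))
      = sc (bracket Et n Zt (-m)) (?Y' (?W' v)) + sc (bracket Ga m Be (-n)) (?Z' (?X' v))"
    by (rule op_fermionic_bilinears_anticomm) (use n m in auto)
  have "d_term n (homotopy_term m v) + homotopy_term m (d_term n v) =
      sc (Pp p pphi n * homotopy_coeff m) (?X (?Y (?Z (?W v))) + ?Z (?W (?X (?Y v))))
    + sc (Pp p pphi n * of_int (sgn m)) (?X (?Y (?Z' (?W' v))) + ?Z' (?W' (?X (?Y v))))
    + sc (homotopy_coeff m) (?X' (?Y' (?Z (?W v))) + ?Z (?W (?X' (?Y' v))))
    + sc (of_int (sgn m)) (?X' (?Y' (?Z' (?W' v))) + ?Z' (?W' (?X' (?Y' v))))"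
    using n m by (simp add: d0_term_def homotopy_term_def vs.scale_right_distrib mult.commute algebra_simps)
  also have "\<dots> = (if n = m then number_term n v else 0)"
    unfolding g1 g2 g3 g4 using n m
    by (auto simp: bracket_def number_term_def vs.scale_right_distrib vs.scale_right_diff_distrib
        algebra_simps)
  finally show ?thesis .
qed

lemma d_term_anticomm:
  assumes n: "n \<noteq> 0" and m: "m \<noteq> 0"
  shows "d_term n (d_term m v) + d_term m (d_term n v) = 0"
proof -
  let ?X = "op Cg (-n)" and ?Y = "op Am n" and ?X' = "op Et n" and ?Y' = "op Be (-n)"
  let ?Z = "op Cg (-m)" and ?W = "op Am m" and ?Z' = "op Et m" and ?W' = "op Be (-m)"
  have "?X (?Y (?Z (?W v))) + ?Z (?W (?X (?Y v))) = 0"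
    using op_fermionic_bilinears_anticomm[of Cg Am Cg Am "-n" n "-m" m v] n m by (simp add: bracket_same_mode)
  moreover have "?X (?Y (?Z' (?W' v))) + ?Z' (?W' (?X (?Y v))) = 0"
    using op_fermionic_bilinears_anticomm[of Cg Am Et Be "-n" n m "-m" v] n m by (simp add: bracket_def)
  moreover have "?X' (?Y' (?Z (?W v))) + ?Z (?W (?X' (?Y' v))) = 0"
    using op_fermionic_bilinears_anticomm[of Et Be Cg Am n "-n" "-m" m v] n m by (simp add: bracket_def)
  moreover have "?X' (?Y' (?Z' (?W' v))) + ?Z' (?W' (?X' (?Y' v))) = 0"
    using op_fermionic_bilinears_anticomm[of Et Be Et Be n "-n" m "-m" v] n m by (simp add: bracket_same_mode)
  moreover have "d_term n (d_term m v) + d_term m (d_term n v) =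
      sc (Pp p pphi n * Pp p pphi m) (?X (?Y (?Z (?W v))) + ?Z (?W (?X (?Y v))))
    + sc (Pp p pphi n) (?X (?Y (?Z' (?W' v))) + ?Z' (?W' (?X (?Y v))))
    + sc (Pp p pphi m) (?X' (?Y' (?Z (?W v))) + ?Z (?W (?X' (?Y' v))))
    + (?X' (?Y' (?Z' (?W' v))) + ?Z' (?W' (?X' (?Y' v))))"
    using n m by (simp add: d0_term_def vs.scale_right_distrib mult.commute algebra_simps)
  ultimately show ?thesis
    by simp
qed

lemma Pp_homotopy_coeff:
  "n \<noteq> 0 \<Longrightarrow> Pp p pphi n * homotopy_coeff n * of_int n = (if n = r then 0 else of_int (sgn n))"
proof (cases "n = r")
  case False
  assume n: "n \<noteq> 0"
  have "Pp p pphi n \<noteq> 0"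
    using False by (simp add: Pp_eq)
  moreover have "of_int n = (of_int (sgn n) * of_int \<bar>n\<bar> :: complex)"
    by (metis of_int_mult sgn_mult_abs)
  ultimately show ?thesis
    using False n by (simp add: homotopy_coeff_def field_simps)
qed (simp add: homotopy_coeff_def)

definition number_term_shift :: "int \<Rightarrow> mode \<Rightarrow> int \<Rightarrow> complex" where
  "number_term_shift n k c = (case k of
      Ap \<Rightarrow> if n = -c then Pp p pphi n * homotopy_coeff n * of_int n else 0
    | Am \<Rightarrow> if n = c then - (Pp p pphi n * homotopy_coeff n * of_int n) else 0
    | Cg \<Rightarrow> if n = -c then Pp p pphi n * homotopy_coeff n * of_int n else 0
    | Bt \<Rightarrow> if n = c then - (Pp p pphi n * homotopy_coeff n * of_int n) else 0
    | Ga \<Rightarrow> if n = c then - of_int (sgn n) else 0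
    | Be \<Rightarrow> if n = -c then of_int (sgn n) else 0
    | Et \<Rightarrow> if n = c then - of_int (sgn n) else 0
    | Zt \<Rightarrow> if n = -c then of_int (sgn n) else 0)"

lemma number_term_op:
  assumes n: "n \<noteq> 0" and c: "c \<noteq> 0"
  shows "number_term n (op k c x) = op k c (number_term n x) + sc (number_term_shift n k c) (op k c x)"
proof -
  let ?w = "Pp p pphi n * homotopy_coeff n"
  have c1: "op Am n (op Ap (-n) (op k c x)) = op k c (op Am n (op Ap (-n) x))
      + sc (exchange_sign Ap k * bracket Am n k c) (op Ap (-n) x) + sc (bracket Ap (-n) k c) (op Am n x)"
    by (rule op_even_bilinear_comm) (use n c in auto)
  have c2: "op Bt n (op Cg (-n) (op k c x)) = op k c (op Bt n (op Cg (-n) x))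
      + sc (exchange_sign Cg k * bracket Bt n k c) (op Cg (-n) x) + sc (bracket Cg (-n) k c) (op Bt n x)"
    by (rule op_even_bilinear_comm) (use n c in auto)
  have c3: "op Be (-n) (op Ga n (op k c x)) = op k c (op Be (-n) (op Ga n x))
      + sc (exchange_sign Ga k * bracket Be (-n) k c) (op Ga n x) + sc (bracket Ga n k c) (op Be (-n) x)"
    by (rule op_even_bilinear_comm) (use n c in auto)
  have c4: "op Zt (-n) (op Et n (op k c x)) = op k c (op Zt (-n) (op Et n x))
      + sc (exchange_sign Et k * bracket Zt (-n) k c) (op Et n x) + sc (bracket Et n k c) (op Zt (-n) x)"
    by (rule op_even_bilinear_comm) (use n c in auto)
  define E where "E =
      sc ?w (sc (exchange_sign Ap k * bracket Am n k c) (op Ap (-n) x) + sc (bracket Ap (-n) k c) (op Am n x)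
        - sc (of_int n) (sc (exchange_sign Cg k * bracket Bt n k c) (op Cg (-n) x)
          + sc (bracket Cg (-n) k c) (op Bt n x)))
    + sc (of_int (sgn n)) (sc (exchange_sign Ga k * bracket Be (-n) k c) (op Ga n x)
        + sc (bracket Ga n k c) (op Be (-n) x)
        + sc (exchange_sign Et k * bracket Zt (-n) k c) (op Et n x) + sc (bracket Et n k c) (op Zt (-n) x))"
  have "number_term n (op k c x) = op k c (number_term n x) + E"
    unfolding number_term_def c1 c2 c3 c4 E_def using n c
    by (simp add: vs.scale_right_distrib vs.scale_right_diff_distrib algebra_simps)
  moreover have "E = sc (number_term_shift n k c) (op k c x)"
    unfolding E_def number_term_shift_def
    by (cases k) (auto simp: bracket_def exchange_sign_def)
  ultimately show ?thesis
    by simp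
qed

lemma number_term_vac: "n \<noteq> 0 \<Longrightarrow> number_term n vac = 0"
proof (cases "n > 0")
  case True
  have "op Am n (op Ap (-n) vac) = sc (of_int n) vac"
    using op_exchange[of n "-n" Am Ap vac] True by (simp add: op_vac exchange_sign_def bracket_def)
  moreover have "op Bt n (op Cg (-n) vac) = vac"
    using op_exchange[of n "-n" Bt Cg vac] True by (simp add: op_vac exchange_sign_def bracket_def)
  ultimately show ?thesis
    unfolding number_term_def using True by (simp add: op_vac)
next
  case False
  assume "n \<noteq> 0"
  then have n: "-n > 0" using False by simp
  have "op Be (-n) (op Ga n vac) = - vac"
    using op_exchange[of "-n" n Be Ga vac] n by (simp add: op_vac exchange_sign_def bracket_def)
  moreover have "op Zt (-n) (op Et n vac) = vac"
    using op_exchange[of "-n" n Zt Et vac] n by (simp add: op_vac exchange_sign_def bracket_def)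
  ultimately show ?thesis
    unfolding number_term_def using n by (simp add: op_vac)
qed

definition surviving :: "mode \<Rightarrow> int \<Rightarrow> bool" where
  "surviving k c \<longleftrightarrow> (k = Ap \<or> k = Cg) \<and> c = -r \<or> (k = Am \<or> k = Bt) \<and> c = r"

text \<open>The surviving oscillators have non-zero brackets only with the modes \<open>\<alpha>\<^sup>-\<^sub>r\<close> and
  \<open>c\<^sub>-\<^sub>r\<close> of \<open>d_term r\<close>, whose coefficient \<open>P\<^sup>+(r)\<close> vanishes.\<close>
lemma d_term_surviving_mono:
  assumes ms: "creation_list ms" and surv: "\<forall>x\<in>set ms. surviving (fst x) (snd x)" and n: "n \<noteq> 0"
  shows "d_term n (mono op vac ms) = 0"
proof -
  have brackets: "\<forall>x\<in>set ms. bracket k m (fst x) (snd x) = 0"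
    if "m > 0" "k = Am \<and> m \<noteq> r \<or> k = Cg \<and> m \<noteq> -r \<or> k = Et \<or> k = Be" for k m
    using surv that by (auto simp: surviving_def bracket_def)
  have "op Et n (op Be (-n) (mono op vac ms)) = 0"
  proof (cases "n > 0")
    case True
    have "op Et n (mono op vac ((Be, -n) # ms)) = 0"
      by (rule op_mono_eq_0) (use True ms brackets in \<open>auto simp: bracket_def\<close>)
    then show ?thesis by simp
  next
    case False
    then have "op Be (-n) (mono op vac ms) = 0"
      by (intro op_mono_eq_0) (use n ms brackets in auto)
    then show ?thesis using n by simp
  qed
  moreover have "sc (Pp p pphi n) (op Cg (-n) (op Am n (mono op vac ms))) = 0"
  proof (cases "n = r")
    case True
    then show ?thesis by (simp add: Pp_r)
  next
    case nr: False
    show ?thesis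
    proof (cases "n > 0")
      case True
      have "op Am n (mono op vac ms) = 0"
        by (rule op_mono_eq_0) (use True ms nr brackets in auto)
      then show ?thesis using n by simp
    next
      case False
      have "\<forall>x\<in>set ((Am, n) # ms). bracket Cg (-n) (fst x) (snd x) = 0"
        using brackets[of "-n" Cg] False n nr by (simp add: bracket_def)
      then have "op Cg (-n) (mono op vac ((Am, n) # ms)) = 0"
        by (intro op_mono_eq_0) (use False n ms in auto)
      then show ?thesis by simp
    qed
  qed
  ultimately show ?thesis
    by (simp add: d0_term_def)
qed

lemma d0_surviving_mono:
  "creation_list ms \<Longrightarrow> \<forall>x\<in>set ms. surviving (fst x) (snd x) \<Longrightarrow> d0 sc op p pphi (mono op vac ms) = 0"
  using d_term_surviving_mono by (simp add: d0_def)

end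

section \<open>Cohomology at positive level\<close>

locale fock_positive_level = fock_momenta sc op vac Lhat p pphi r s
  for sc :: "complex \<Rightarrow> 'v::ab_group_add \<Rightarrow> 'v" and op vac Lhat p pphi r s +
  assumes rs_pos: "0 < r * s"
begin

definition mode_window :: "int set" where
  "mode_window = {n. n \<noteq> 0 \<and> \<bar>n\<bar> \<le> r * s}"

lemma finite_mode_window [simp]: "finite mode_window"
  by (rule finite_subset[of _ "{- (r * s)..r * s}"]) (auto simp: mode_window_def)

lemma mode_window_nonzero: "n \<in> mode_window \<Longrightarrow> n \<noteq> 0"
  by (simp add: mode_window_def)

definition d_trunc :: "'v \<Rightarrow> 'v" where
  "d_trunc v = (\<Sum>n\<in>mode_window. d_term n v)"

definition homotopy :: "'v \<Rightarrow> 'v" where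
  "homotopy v = (\<Sum>n\<in>mode_window. homotopy_term n v)"

definition number_op :: "'v \<Rightarrow> 'v" where
  "number_op v = (\<Sum>n\<in>mode_window. number_term n v)"

lemma d_trunc_add [simp]: "d_trunc (x + y) = d_trunc x + d_trunc y"
  and d_trunc_scale [simp]: "d_trunc (sc a x) = sc a (d_trunc x)"
  and homotopy_add [simp]: "homotopy (x + y) = homotopy x + homotopy y"
  and homotopy_scale [simp]: "homotopy (sc a x) = sc a (homotopy x)"
  and number_op_add [simp]: "number_op (x + y) = number_op x + number_op y"
  and number_op_scale [simp]: "number_op (sc a x) = sc a (number_op x)"
  by (simp_all add: d_trunc_def homotopy_def number_op_def mode_window_nonzero sum.distrib
      vs.scale_sum_right)

lemma homotopy_zero [simp]: "homotopy 0 = 0"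
  and number_op_zero [simp]: "number_op 0 = 0"
  using homotopy_scale[of 0 0] number_op_scale[of 0 0] by simp_all

lemma d_trunc_sum: "d_trunc (sum g A) = (\<Sum>a\<in>A. d_trunc (g a))"
  and number_op_sum: "number_op (sum g A) = (\<Sum>a\<in>A. number_op (g a))"
  by (simp_all add: additive.sum additive_def)

lemma linear_number_op: "Vector_Spaces.linear sc sc number_op"
  by (simp add: Vector_Spaces.linear_iff vs.vector_space_axioms)

lemma d_trunc_homotopy: "d_trunc (homotopy v) + homotopy (d_trunc v) = number_op v"
proof -
  have "d_trunc (homotopy v) = (\<Sum>n\<in>mode_window. \<Sum>m\<in>mode_window. d_term n (homotopy_term m v))"
    unfolding d_trunc_def homotopy_def by (simp add: d_term_sum mode_window_nonzero)
  moreover have "homotopy (d_trunc v) = (\<Sum>n\<in>mode_window. \<Sum>m\<in>mode_window. homotopy_term m (d_term n v))"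
    unfolding d_trunc_def homotopy_def
    by (simp add: homotopy_term_def mode_window_nonzero op_sum vs.scale_sum_right sum.distrib[symmetric])
      (rule sum.swap)
  ultimately have "d_trunc (homotopy v) + homotopy (d_trunc v)
      = (\<Sum>n\<in>mode_window. \<Sum>m\<in>mode_window. d_term n (homotopy_term m v) + homotopy_term m (d_term n v))"
    by (simp add: sum.distrib)
  also have "\<dots> = (\<Sum>n\<in>mode_window. \<Sum>m\<in>mode_window. if n = m then number_term n v else 0)"
    by (intro sum.cong refl) (simp add: d_term_homotopy_term_anticomm mode_window_nonzero)
  also have "\<dots> = number_op v"
    by (simp add: number_op_def)
  finally show ?thesis .
qed

lemma d_trunc_square: "d_trunc (d_trunc v) = 0"
proof -
  define S where "S = (\<Sum>n\<in>mode_window. \<Sum>m\<in>mode_window. d_term n (d_term m v))"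
  have swap: "(\<Sum>n\<in>mode_window. \<Sum>m\<in>mode_window. d_term m (d_term n v)) = S"
    unfolding S_def by (rule sum.swap)
  have "S = (\<Sum>n\<in>mode_window. \<Sum>m\<in>mode_window. - d_term m (d_term n v))"
    unfolding S_def
    by (intro sum.cong refl add_eq_0_iff2[THEN iffD1] d_term_anticomm mode_window_nonzero)
  also have "\<dots> = - S"
    by (simp only: sum_negf swap)
  finally have "S + S = 0"
    by (metis add.right_inverse)
  moreover have "d_trunc (d_trunc v) = S"
    unfolding S_def d_trunc_def by (simp add: d_term_sum mode_window_nonzero)
  ultimately show ?thesis
    by simp
qed

lemma d_trunc_number_op_comm: "d_trunc (number_op x) = number_op (d_trunc x)"
  using d_trunc_homotopy[of x, symmetric] d_trunc_homotopy[of "d_trunc x", symmetric]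
  by (simp add: d_trunc_square)

lemma d_term_outside_window:
  assumes x: "Lhat x = sc (of_int (r * s)) x" and n: "n \<noteq> 0" "n \<notin> mode_window"
  shows "d_term n x = 0"
proof (cases "n > 0")
  case True
  then have "op Am n x = 0" "op Et n x = 0"
    using op_above_level_eq_0[OF x n(1)] n by (auto simp: mode_window_def)
  then show ?thesis
    using n op_commute_mixed_statistics[of n "-n" Et Be x] by (simp add: d0_term_def)
next
  case False
  then have "op Cg (-n) x = 0" "op Be (-n) x = 0"
    using op_above_level_eq_0[OF x, of "-n"] n by (auto simp: mode_window_def)
  then show ?thesis
    using n op_commute_mixed_statistics[of "-n" n Cg Am x] by (simp add: d0_term_def)
qed

lemma d0_eq_d_trunc:
  assumes "Lhat x = sc (of_int (r * s)) x"
  shows "d0 sc op p pphi x = d_trunc x"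
  unfolding d0_def d_trunc_def
proof (rule sum.mono_neutral_left)
  show "{n. n \<noteq> 0 \<and> d_term n x \<noteq> 0} \<subseteq> mode_window"
    using d_term_outside_window[OF assms] by blast
qed (use mode_window_nonzero in auto)

lemma homotopy_Lhat_eigenvector: "Lhat x = sc \<mu> x \<Longrightarrow> Lhat (homotopy x) = sc \<mu> (homotopy x)"
proof -
  assume x: "Lhat x = sc \<mu> x"
  have "homotopy_term n x \<in> {x. Lhat x = sc \<mu> x}" if "n \<in> mode_window" for n
  proof -
    have n: "n \<noteq> 0" "-n \<noteq> 0"
      using mode_window_nonzero[OF that] by simp_all
    have "Lhat (op Bt n (op Ap (-n) x)) = sc \<mu> (op Bt n (op Ap (-n) x))"
      using op_Lhat_eigenvector[OF n(1) op_Lhat_eigenvector[OF n(2) x]] by simp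
    moreover have "Lhat (op Zt (-n) (op Ga n x)) = sc \<mu> (op Zt (-n) (op Ga n x))"
      using op_Lhat_eigenvector[OF n(2) op_Lhat_eigenvector[OF n(1) x]] by simp
    ultimately show ?thesis
      by (simp add: homotopy_term_def vs.scale_right_distrib mult.commute)
  qed
  then have "homotopy x \<in> {x. Lhat x = sc \<mu> x}"
    unfolding homotopy_def by (rule vs.subspace_sum[OF subspace_Lhat_eigenspace])
  then show ?thesis
    by simp
qed

definition excitation_number :: "(mode \<times> int) list \<Rightarrow> nat" where
  "excitation_number ms = length (filter (\<lambda>x. \<not> surviving (fst x) (snd x)) ms)"

lemma sum_number_term_shift:
  assumes c: "c < 0" "- c \<le> r * s"
  shows "(\<Sum>n\<in>mode_window. number_term_shift n k c) = (if surviving k c then 0 else 1)"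
proof -
  have "-c \<in> mode_window" "c \<in> mode_window"
    using c by (auto simp: mode_window_def)
  then have at_minus_c: "(\<Sum>n\<in>mode_window. if n = -c then g n else 0) = g (-c)"
    and at_c: "(\<Sum>n\<in>mode_window. if n = c then g n else 0) = g c" for g :: "int \<Rightarrow> complex"
    by (simp_all add: sum.delta)
  have "c \<noteq> 0" "-c \<noteq> 0"
    using c by auto
  note shift = Pp_homotopy_coeff[OF this(1)] Pp_homotopy_coeff[OF this(2)]
  show ?thesis
    by (cases k) (simp_all only: number_term_shift_def mode.case at_minus_c at_c shift,
        (use c in \<open>auto simp: surviving_def\<close>))
qed

lemma number_op_op:
  "c \<noteq> 0 \<Longrightarrow> number_op (op k c x) = op k c (number_op x) + sc (\<Sum>n\<in>mode_window. number_term_shift n k c) (op k c x)"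
  unfolding number_op_def
  by (simp add: number_term_op mode_window_nonzero sum.distrib op_sum vs.scale_sum_left)

lemma number_op_vac: "number_op vac = 0"
  by (simp add: number_op_def number_term_vac mode_window_nonzero)

lemma number_op_mono:
  "creation_list ms \<Longrightarrow> \<forall>x\<in>set ms. - snd x \<le> r * s \<Longrightarrow>
   number_op (mono op vac ms) = sc (of_nat (excitation_number ms)) (mono op vac ms)"
proof (induction ms)
  case Nil
  then show ?case by (simp add: number_op_vac excitation_number_def)
next
  case (Cons x ms)
  obtain k c where x: "x = (k, c)" by force
  then have "c < 0" "- c \<le> r * s"
    using Cons.prems by auto
  then show ?case
    using Cons x by (simp add: number_op_op sum_number_term_shift excitation_number_def vs.scale_left_distrib
        add.commute)
qed

lemma number_op_level_mono:
  "creation_list ms \<Longrightarrow> mono_level ms = r * s \<Longrightarrow>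
   number_op (mono op vac ms) = sc (of_nat (excitation_number ms)) (mono op vac ms)"
  using mono_level_ge_mode[of ms] by (intro number_op_mono) auto

lemma excitation_number_eq_0_iff:
  "excitation_number ms = 0 \<longleftrightarrow> (\<forall>x\<in>set ms. surviving (fst x) (snd x))"
  by (simp add: excitation_number_def filter_empty_conv)

definition ms1 :: "(mode \<times> int) list" where
  "ms1 = (if r < 0 then replicate (nat (-s)) (Am, r) else replicate (nat s) (Ap, -r))"

definition ms2 :: "(mode \<times> int) list" where
  "ms2 = (if r < 0 then (Bt, r) # replicate (nat (-s - 1)) (Am, r) else (Cg, -r) # replicate (nat (s - 1)) (Ap, -r))"

lemma surviving_modes_cases:
  obtains i l kb kf where "i < 0" "0 < l" "- i * l = r * s" "\<not> fermionic kb" "fermionic kf"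
    "\<And>k c. c < 0 \<Longrightarrow> surviving k c \<longleftrightarrow> (k, c) = (kb, i) \<or> (k, c) = (kf, i)"
    "ms1 = replicate (nat l) (kb, i)" "ms2 = (kf, i) # replicate (nat l - 1) (kb, i)"
proof (cases "r < 0")
  case True
  then have "s < 0"
    using rs_pos by (simp add: zero_less_mult_iff)
  with True show ?thesis
    by (intro that[of r "-s" Am Bt]) (auto simp: surviving_def ms1_def ms2_def nat_diff_distrib)
next
  case False
  then have "0 < r" "0 < s"
    using rs_pos by (auto simp: zero_less_mult_iff)
  then show ?thesis
    by (intro that[of "-r" s Ap Cg]) (auto simp: surviving_def ms1_def ms2_def nat_diff_distrib)
qed

lemma representative_modes:
  "ms \<in> {ms1, ms2} \<Longrightarrow> creation_list ms \<and> mono_level ms = r * s \<and> (\<forall>x\<in>set ms. surviving (fst x) (snd x))"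
proof -
  assume ms: "ms \<in> {ms1, ms2}"
  obtain i l kb kf where i: "i < 0" "0 < l" "- i * l = r * s"
    and "\<not> fermionic kb" "fermionic kf"
    and surv: "\<And>k c. c < 0 \<Longrightarrow> surviving k c \<longleftrightarrow> (k, c) = (kb, i) \<or> (k, c) = (kf, i)"
    and "ms1 = replicate (nat l) (kb, i)" "ms2 = (kf, i) # replicate (nat l - 1) (kb, i)"
    using surviving_modes_cases by blast
  moreover have "- i * int (nat l - 1) - i = r * s"
    using i by (simp add: of_nat_diff algebra_simps)
  ultimately show ?thesis
    using ms surv[of i] by (auto simp: creation_list_replicate)
qed

lemma surviving_mono_in_span:
  assumes ms: "creation_list ms" "mono_level ms = r * s" and surv: "\<forall>x\<in>set ms. surviving (fst x) (snd x)"
  shows "mono op vac ms \<in> vs.span {mono op vac ms1, mono op vac ms2}"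
proof -
  obtain i l kb kf where i: "i < 0" "0 < l" "- i * l = r * s" and kb: "\<not> fermionic kb" and kf: "fermionic kf"
    and survI: "\<And>k c. c < 0 \<Longrightarrow> surviving k c \<longleftrightarrow> (k, c) = (kb, i) \<or> (k, c) = (kf, i)"
    and ms12: "ms1 = replicate (nat l) (kb, i)" "ms2 = (kf, i) # replicate (nat l - 1) (kb, i)"
    using surviving_modes_cases by blast
  have two_modes: "\<forall>x\<in>set ms. x = (kb, i) \<or> x = (kf, i)"
    using surv survI ms(1) by (auto simp: creation_list_def)
  then have "\<forall>x\<in>set ms. snd x = i"
    by auto
  then have "- i * int (length ms) = - i * l"
    using mono_level_const[of ms i] ms(2) i(3) by presburger
  then have "length ms = nat l"
    using i(1) by simp
  then show ?thesis
    using mono_two_modes_cases[OF i(1) kb kf two_modes] ms12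
    by (auto intro: vs.span_base vs.span_zero)
qed

lemma representative_cocycle:
  "ms \<in> {ms1, ms2} \<Longrightarrow> mono op vac ms \<in> kerL0 sc Lhat p pphi \<and> d0 sc op p pphi (mono op vac ms) = 0"
  using representative_modes[of ms] by (simp add: kerL0_iff Lhat_mono d0_surviving_mono)

lemma number_op_eigen_decomposition:
  assumes v: "Lhat v = sc (of_int (r * s)) v"
  obtains Q u where "finite Q" "0 \<in> Q" "v = (\<Sum>q\<in>Q. u q)"
    "\<And>q. number_op (u q) = sc q (u q)" "\<And>q. Lhat (u q) = sc (of_int (r * s)) (u q)"
    "u 0 \<in> vs.span {mono op vac ms1, mono op vac ms2}"
proof -
  obtain t c ms where t: "finite t" and v_eq: "v = (\<Sum>a\<in>t. sc (c a) a)"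
    and ms: "\<And>a. a \<in> t \<Longrightarrow> mono op vac (ms a) = a \<and> creation_list (ms a)
      \<and> of_int (mono_level (ms a)) = (of_int (r * s) :: complex)"
    using Lhat_eigenvector_mono_expansion[OF v] by blast
  then have level: "mono_level (ms a) = r * s" if "a \<in> t" for a
    using that by (simp only: of_int_eq_iff)
  define q where "q a = (of_nat (excitation_number (ms a)) :: complex)" for a
  define u where "u q0 = (\<Sum>a\<in>{a\<in>t. q a = q0}. sc (c a) a)" for q0
  have number_a: "number_op a = sc (q a) a" if "a \<in> t" for a
    using number_op_level_mono[of "ms a"] ms[OF that] level[OF that] by (simp add: q_def)
  have Lhat_a: "sc (c a) a \<in> {x. Lhat x = sc (of_int (r * s)) x}" if "a \<in> t" for a
    using Lhat_mono[of "ms a"] ms[OF that] level[OF that] by (simp add: mult.commute)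
  show ?thesis
  proof (rule that)
    show "finite (insert 0 (q ` t))"
      using t by simp
    show "v = (\<Sum>q\<in>insert 0 (q ` t). u q)"
    proof -
      have "v = (\<Sum>q\<in>q ` t. u q)"
        unfolding v_eq u_def by (rule sum.image_gen[OF t])
      moreover have "u 0 = 0" if "0 \<notin> q ` t"
        using that by (auto simp: u_def intro!: sum.neutral)
      ultimately show ?thesis
        using t by (cases "0 \<in> q ` t") (simp_all add: insert_absorb)
    qed
    show "number_op (u q0) = sc q0 (u q0)" for q0
      unfolding u_def number_op_sum vs.scale_sum_right
      by (intro sum.cong refl) (simp add: number_a mult.commute)
    show "Lhat (u q0) = sc (of_int (r * s)) (u q0)" for q0
      using vs.subspace_sum[OF subspace_Lhat_eigenspace, of "{a\<in>t. q a = q0}" "\<lambda>a. sc (c a) a"] Lhat_a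
      by (simp add: u_def)
    show "u 0 \<in> vs.span {mono op vac ms1, mono op vac ms2}"
      unfolding u_def
    proof (intro vs.subspace_sum[OF vs.subspace_span] vs.span_scale)
      fix a assume a: "a \<in> {a\<in>t. q a = 0}"
      then have "\<forall>x\<in>set (ms a). surviving (fst x) (snd x)"
        by (simp add: q_def excitation_number_eq_0_iff)
      then show "a \<in> vs.span {mono op vac ms1, mono op vac ms2}"
        using surviving_mono_in_span[of "ms a"] ms[of a] level[of a] a by simp
    qed
  qed (simp_all add: t)
qed

lemma d_trunc_eigencomponent_closed:
  assumes "finite Q" "q \<in> Q" "d_trunc (\<Sum>q\<in>Q. u q) = 0" and eig: "\<And>q. number_op (u q) = sc q (u q)"
  shows "d_trunc (u q) = 0"
proof -
  have "\<forall>q\<in>Q. number_op (d_trunc (u q)) = sc q (d_trunc (u q))"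
    using eig by (simp flip: d_trunc_number_op_comm)
  moreover have "number_op (\<Sum>q\<in>Q. d_trunc (u q)) = sc q (\<Sum>q\<in>Q. d_trunc (u q))"
    using assms(3) by (simp flip: d_trunc_sum)
  ultimately have "(\<Sum>q\<in>Q. d_trunc (u q)) = (\<Sum>q'\<in>{q'\<in>Q. q' = q}. d_trunc (u q'))"
    by (rule eigenvector_sum_eq_component[OF linear_number_op assms(1)])
  moreover have "{q'\<in>Q. q' = q} = {q}"
    using assms(2) by auto
  ultimately show ?thesis
    using assms(3) by (simp add: d_trunc_sum)
qed

lemma number_op_eigenvector_exact:
  assumes "d_trunc u = 0" "number_op u = sc q u" "q \<noteq> 0"
  shows "u = d_trunc (sc (1 / q) (homotopy u))"
  using d_trunc_homotopy[of u] assms by simp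

lemma closed_decomposition:
  assumes v: "Lhat v = sc (of_int (r * s)) v" and closed: "d0 sc op p pphi v = 0"
  obtains a b w where "Lhat w = sc (of_int (r * s)) w"
    "v = sc a (mono op vac ms1) + sc b (mono op vac ms2) + d0 sc op p pphi w"
proof -
  obtain Q u where Q: "finite Q" "0 \<in> Q" and v_eq: "v = (\<Sum>q\<in>Q. u q)"
    and number_u: "\<And>q. number_op (u q) = sc q (u q)" and Lhat_u: "\<And>q. Lhat (u q) = sc (of_int (r * s)) (u q)"
    and u0: "u 0 \<in> vs.span {mono op vac ms1, mono op vac ms2}"
    using number_op_eigen_decomposition[OF v] by blast
  obtain a b where ab: "u 0 = sc a (mono op vac ms1) + sc b (mono op vac ms2)"
    using vs.in_span_pairE[OF u0] .
  define w where "w = (\<Sum>q\<in>Q - {0}. sc (1 / q) (homotopy (u q)))"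
  have Lhat_w: "Lhat w = sc (of_int (r * s)) w"
    using vs.subspace_sum[OF subspace_Lhat_eigenspace, of "Q - {0}" "\<lambda>q. sc (1 / q) (homotopy (u q))"]
      homotopy_Lhat_eigenvector[OF Lhat_u] by (simp add: w_def mult.commute)
  have "d_trunc (u q) = 0" if "q \<in> Q" for q
    using d_trunc_eigencomponent_closed[OF Q(1) that _ number_u] closed d0_eq_d_trunc[OF v] v_eq by simp
  then have exact: "u q = sc (1 / q) (d_trunc (homotopy (u q)))" if "q \<in> Q - {0}" for q
    using number_op_eigenvector_exact[OF _ number_u] that by simp
  have "d0 sc op p pphi w = d_trunc w"
    by (rule d0_eq_d_trunc[OF Lhat_w])
  also have "\<dots> = (\<Sum>q\<in>Q - {0}. u q)"
    unfolding w_def d_trunc_sum using exact by (intro sum.cong) simp_all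
  moreover have "v = u 0 + (\<Sum>q\<in>Q - {0}. u q)"
    using v_eq Q by (simp add: sum.remove)
  ultimately show ?thesis
    using that[OF Lhat_w] ab by simp
qed

lemma cohomology_basis:
  "let S1 = mono op vac ms1; S2 = mono op vac ms2
   in S1 \<in> kerL0 sc Lhat p pphi \<and> S2 \<in> kerL0 sc Lhat p pphi
    \<and> d0 sc op p pphi S1 = 0 \<and> d0 sc op p pphi S2 = 0
    \<and> (\<forall>v\<in>kerL0 sc Lhat p pphi. d0 sc op p pphi v = 0 \<longrightarrow>
         (\<exists>a b. \<exists>w\<in>kerL0 sc Lhat p pphi. v = sc a S1 + sc b S2 + d0 sc op p pphi w))"
proof -
  have "\<exists>a b. \<exists>w\<in>kerL0 sc Lhat p pphi. v = sc a (mono op vac ms1) + sc b (mono op vac ms2) + d0 sc op p pphi w"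
    if v: "v \<in> kerL0 sc Lhat p pphi" and closed: "d0 sc op p pphi v = 0" for v
  proof -
    obtain a b w where "Lhat w = sc (of_int (r * s)) w"
      and "v = sc a (mono op vac ms1) + sc b (mono op vac ms2) + d0 sc op p pphi w"
      by (rule closed_decomposition[OF v[unfolded kerL0_iff] closed])
    then show ?thesis
      using kerL0_iff by blast
  qed
  then show ?thesis
    using representative_cocycle by (simp add: Let_def)
qed

end

theorem theorem4:
  fixes sc :: "complex \<Rightarrow> 'v::ab_group_add \<Rightarrow> 'v"
    and op :: "mode \<Rightarrow> int \<Rightarrow> 'v \<Rightarrow> 'v"
    and vac :: 'v
    and Lhat :: "'v \<Rightarrow> 'v"
    and p pphi :: complex
    and r s :: int
  assumes fock: "is_fock_space sc op vac Lhat"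
    and rs: "r \<noteq> 0" "s \<noteq> 0"
    and Pr: "Pp p pphi r = 0"
    and Ps: "Pm p pphi s = 0"
  defines "K \<equiv> kerL0 sc Lhat p pphi"
    and "d \<equiv> d0 sc op p pphi"
  shows
    "(r * s < 0 \<longrightarrow> (\<forall>v \<in> K. d v = 0 \<longrightarrow> (\<exists>w \<in> K. v = d w)))
   \<and> (r < 0 \<and> s < 0 \<longrightarrow>
       (let ms1 = replicate (nat (-s)) (Am, r);
            ms2 = (Bt, r) # replicate (nat (-s - 1)) (Am, r);
            S1 = mono op vac ms1; S2 = mono op vac ms2
        in mono_ghost ms1 = 0 \<and> mono_ghost ms2 = -1
         \<and> S1 \<in> K \<and> S2 \<in> K \<and> d S1 = 0 \<and> d S2 = 0
         \<and> (\<forall>v \<in> K. d v = 0 \<longrightarrow>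
              (\<exists>a b. \<exists>w \<in> K. v = sc a S1 + sc b S2 + d w))))
   \<and> (r > 0 \<and> s > 0 \<longrightarrow>
       (let ms1 = replicate (nat s) (Ap, -r);
            ms2 = (Cg, -r) # replicate (nat (s - 1)) (Ap, -r);
            S1 = mono op vac ms1; S2 = mono op vac ms2
        in mono_ghost ms1 = 0 \<and> mono_ghost ms2 = 1
         \<and> S1 \<in> K \<and> S2 \<in> K \<and> d S1 = 0 \<and> d S2 = 0
         \<and> (\<forall>v \<in> K. d v = 0 \<longrightarrow>
              (\<exists>a b. \<exists>w \<in> K. v = sc a S1 + sc b S2 + d w))))"
proof -
  interpret fock_momenta sc op vac Lhat p pphi r s
    using fock Pr Ps by (simp add: fock_momenta_def fock_momenta_axioms_def fock_space_def)
  have "r * s < 0 \<longrightarrow> (\<forall>v \<in> K. d v = 0 \<longrightarrow> (\<exists>w \<in> K. v = d w))"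
  proof (intro impI ballI)
    fix v assume "r * s < 0" "v \<in> K"
    then have "v = 0"
      using Lhat_eigenvector_negative_eq_0[of v "r * s"] by (simp add: K_def kerL0_iff)
    moreover have "0 \<in> K" "d 0 = 0"
      by (simp_all add: K_def kerL0_iff d_def d0_def d0_term_def)
    ultimately show "\<exists>w \<in> K. v = d w"
      by metis
  qed
  moreover have negative_level: "fock_positive_level sc op vac Lhat p pphi r s" if "r < 0" "s < 0"
    using that by unfold_locales (simp add: mult_neg_neg)
  moreover have positive_level: "fock_positive_level sc op vac Lhat p pphi r s" if "0 < r" "0 < s"
    using that by unfold_locales simp
  ultimately show ?thesis
    using fock_positive_level.cohomology_basis[OF negative_level]
      fock_positive_level.cohomology_basis[OF positive_level]
    by (simp add: Let_def K_def d_def fock_positive_level.ms1_def[OF negative_level]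
        fock_positive_level.ms2_def[OF negative_level] fock_positive_level.ms1_def[OF positive_level]
        fock_positive_level.ms2_def[OF positive_level])
qed

end
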